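(* Let $p$ be a prime and $R$ a commutative $\mathbb{Q}$-algebra. Let $c_1,c_2,\dots\in R$, and let $X(t)=\sum_{n\ge0}x_nt^n$ and $C(t)=\sum_{n\ge1}\frac{c_n}{n}t^n$ in $R[[t]]$ satisfy $X(t)=\exp(C(t))$; in particular $x_0=1$. Let $U(t)=\sum_{n\ge0}x_{pn}t^{pn}$ be the $p$-singular part and $V(t)=\sum_{p\nmid n}x_nt^n$ the $p$-regular part of $X$. Define $Y(t)=\sum_{n\ge0}y_nt^n=V(t)/U(t)$. Then: (1) $y_n=0$ whenever $p\mid n$; (2) for every $n$, $y_n$ is a polynomial with rational coefficients in the $c_i$ with $p\nmid i$; (3) for every $n\ge1$, $y_n-x_n$ is a $\mathbb{Z}$-linear combination of products $x_\lambda=x_{\lambda_1}x_{\lambda_2}\cdots x_{\lambda_r}$, where $\lambda=(\lambda_1,\dots,\lambda_r)$ runs over partitions of $n$ having at least one part divisible by $p$.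
   Context: For a formal power series $Z(t)=\sum_{n\ge0}z_nt^n$, its $p$-regular part is $\sum_{p\nmid n}z_nt^n$ (which contains no constant term) and its $p$-singular part is $\sum_{n\ge0}z_{pn}t^{pn}$. *)

theory Defs
  imports "HOL-Computational_Algebra.Formal_Power_Series" "HOL-Library.Poly_Mapping"
    "HOL-Library.Multiset"
begin

definition rinv :: "'a::comm_ring_1 \<Rightarrow> 'a" where
  "rinv a = (THE y. a * y = 1)"

text \<open>A commutative ring R is a Q-algebra iff every positive integer is a unit in R;
  the Q-algebra structure is then unique and given by the following map.\<close>
definition is_Q_algebra :: "'a::comm_ring_1 itself \<Rightarrow> bool" where
  "is_Q_algebra _ \<longleftrightarrow> (\<forall>n::nat. n > 0 \<longrightarrow> (of_nat n :: 'a) dvd 1)"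

definition of_rat_alg :: "rat \<Rightarrow> 'a::comm_ring_1" where
  "of_rat_alg q = of_int (fst (quotient_of q)) * rinv (of_int (snd (quotient_of q)))"

definition log_series :: "(nat \<Rightarrow> 'a::comm_ring_1) \<Rightarrow> 'a fps" where
  "log_series c = Abs_fps (\<lambda>n. if n = 0 then 0 else c n * rinv (of_nat n))"

text \<open>exp(F) = sum_k F^k / k! for F with zero constant term (the k > n terms
  contribute nothing to the n-th coefficient).\<close>
definition fps_exp_alg :: "'a::comm_ring_1 fps \<Rightarrow> 'a fps" where
  "fps_exp_alg F = Abs_fps (\<lambda>n. \<Sum>k\<le>n. fps_nth (F ^ k) n * rinv (of_nat (fact k)))"

definition fps_psing :: "nat \<Rightarrow> 'a::comm_ring_1 fps \<Rightarrow> 'a fps" where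
  "fps_psing p Z = Abs_fps (\<lambda>n. if p dvd n then fps_nth Z n else 0)"

definition fps_preg :: "nat \<Rightarrow> 'a::comm_ring_1 fps \<Rightarrow> 'a fps" where
  "fps_preg p Z = Abs_fps (\<lambda>n. if p dvd n then 0 else fps_nth Z n)"

definition fps_quot :: "'a::comm_ring_1 fps \<Rightarrow> 'a fps \<Rightarrow> 'a fps" where
  "fps_quot V U = (THE Y. U * Y = V)"

text \<open>Multivariate polynomials with rational coefficients in variables indexed by nat:
  finitely supported maps from monomials (finitely supported exponent vectors) to rat.\<close>
type_synonym ratpoly = "(nat \<Rightarrow>\<^sub>0 nat) \<Rightarrow>\<^sub>0 rat"

definition ratpoly_eval :: "ratpoly \<Rightarrow> (nat \<Rightarrow> 'a::comm_ring_1) \<Rightarrow> 'a" where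
  "ratpoly_eval P c = (\<Sum>m\<in>Poly_Mapping.keys P. of_rat_alg (Poly_Mapping.lookup P m) *
     (\<Prod>i\<in>Poly_Mapping.keys (m :: nat \<Rightarrow>\<^sub>0 nat). c i ^ Poly_Mapping.lookup m i))"

definition ratpoly_vars :: "ratpoly \<Rightarrow> nat set" where
  "ratpoly_vars P = (\<Union>m\<in>Poly_Mapping.keys P. Poly_Mapping.keys m)"

definition is_partition :: "nat multiset \<Rightarrow> nat \<Rightarrow> bool" where
  "is_partition lam n \<longleftrightarrow> (\<forall>k\<in>#lam. k > 0) \<and> sum_mset lam = n"

end

theory Submission
  imports Defs
begin

text \<open>
  Write C = A + B, where B collects the terms with p dividing the index, and let [Z]
  denote the p-singular part of Z. Then X = exp A * exp B with exp B p-singular, so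
  U = exp B * [exp A] and Y = X/U - 1 = exp A / [exp A] - 1, which only involves the c_i
  with p not dividing i. Since U is p-singular so is its inverse, hence [X/U] = U/U = 1,
  i.e. y_n = 0 for p | n. Finally, solving U * U^-1 = 1 coefficientwise exhibits every
  coefficient of U^-1 of positive degree m as an integer combination of products x_lambda,
  lambda a partition of m with a part divisible by p; multiplying by X gives the claim
  on y_n - x_n.
\<close>

unbundle fps_syntax

lemma rinv_eqI:
  fixes u :: "'a::comm_ring_1"
  assumes "u * y = 1"
  shows "rinv u = y"
  unfolding rinv_def
proof (rule the_equality)
  fix z assume "u * z = 1"
  then show "z = y" by (metis assms mult.assoc mult.commute mult_1_left)
qed (fact assms)

lemma rinv_unit:
  fixes u :: "'a::comm_ring_1"
  assumes "u dvd 1"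
  shows "u * rinv u = 1"
proof -
  obtain v where "1 = u * v" using assms by (auto elim: dvdE)
  then show ?thesis using rinv_eqI[of u v] by simp
qed

lemma rinv_mult:
  fixes u w :: "'a::comm_ring_1"
  assumes "u dvd 1" "w dvd 1"
  shows "rinv (u * w) = rinv u * rinv w"
  by (rule rinv_eqI) (use rinv_unit[OF assms(1)] rinv_unit[OF assms(2)] in \<open>simp add: algebra_simps\<close>)

lemma rinv_1 [simp]: "rinv (1::'a::comm_ring_1) = 1"
  by (rule rinv_eqI) simp

lemma mult_left_cancel_unit:
  fixes u :: "'a::comm_ring_1"
  assumes "u dvd 1" "u * a = u * b"
  shows "a = b"
proof -
  have "rinv u * (u * a) = rinv u * (u * b)" using assms(2) by simp
  then show ?thesis using rinv_unit[OF assms(1)] by (simp add: algebra_simps)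
qed

lemma mult_rinv_eq_mult_rinv:
  fixes u v :: "'a::comm_ring_1"
  assumes "u dvd 1" "v dvd 1" "a * v = b * u"
  shows "a * rinv u = b * rinv v"
proof -
  have "a * rinv u = a * rinv u * (v * rinv v)" using rinv_unit[OF assms(2)] by simp
  also have "\<dots> = (a * v) * rinv u * rinv v" by (simp add: algebra_simps)
  also have "\<dots> = b * (u * rinv u) * rinv v" using assms(3) by (simp add: algebra_simps)
  also have "\<dots> = b * rinv v" using rinv_unit[OF assms(1)] by simp
  finally show ?thesis .
qed

section \<open>The p-singular part\<close>

lemma fps_psing_nth: "fps_psing p Z $ n = (if p dvd n then Z $ n else 0)"
  unfolding fps_psing_def by simp

lemma fps_preg_eq: "fps_preg p Z = Z - fps_psing p Z"
  by (rule fps_ext) (simp add: fps_preg_def fps_psing_nth)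

lemma fps_psing_1 [simp]: "fps_psing p 1 = 1"
  by (rule fps_ext) (simp add: fps_psing_nth)

lemma fps_psing_diff: "fps_psing p (A - B) = fps_psing p A - fps_psing p B"
  by (rule fps_ext) (simp add: fps_psing_nth)

lemma fps_psing_mult_left:
  assumes A: "fps_psing p A = A"
  shows "fps_psing p (A * B) = A * fps_psing p B"
proof (rule fps_ext)
  fix n
  have A_nth: "A $ i = 0" if "\<not> p dvd i" for i
    using arg_cong[OF A, of "\<lambda>F. F $ i"] that by (simp add: fps_psing_nth)
  have "A $ i * B $ (n - i) = A $ i * (if p dvd n - i then B $ (n - i) else 0)"
    if "p dvd n" "i \<le> n" for i
    using that A_nth by (cases "p dvd i") (auto simp: dvd_diff_nat)
  moreover have "A $ i * (if p dvd n - i then B $ (n - i) else 0) = 0"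
    if "\<not> p dvd n" "i \<le> n" for i
    using that A_nth dvd_add[of p i "n - i"] by (cases "p dvd i") auto
  ultimately show "fps_psing p (A * B) $ n = (A * fps_psing p B) $ n"
    unfolding fps_psing_nth fps_mult_nth by auto
qed

lemma fps_psing_power:
  assumes "fps_psing p A = A"
  shows "fps_psing p (A ^ k) = A ^ k"
  by (induction k) (simp_all add: fps_psing_mult_left[OF assms])

lemma fps_psing_fps_exp_alg:
  assumes "fps_psing p B = B"
  shows "fps_psing p (fps_exp_alg B) = fps_exp_alg B"
proof (rule fps_ext)
  fix n
  have "(B ^ k) $ n = 0" if "\<not> p dvd n" for k
    using arg_cong[OF fps_psing_power[OF assms, of k], of "\<lambda>F. F $ n"] that
    by (simp add: fps_psing_nth)
  then show "fps_psing p (fps_exp_alg B) $ n = fps_exp_alg B $ n"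
    by (simp add: fps_psing_nth fps_exp_alg_def)
qed

lemma fps_psing_inverse:
  assumes "fps_psing p U = U" "U * Ui = 1"
  shows "fps_psing p Ui = Ui"
proof -
  have "U * fps_psing p Ui = 1"
    using fps_psing_mult_left[OF assms(1), of Ui] assms(2) by simp
  then have "Ui * (U * fps_psing p Ui) = Ui" by simp
  then show ?thesis using assms(2) by (simp add: mult.assoc[symmetric] mult.commute)
qed

lemma fps_psing_inverse_mult_minus_1:
  assumes "fps_psing p X * Ui = 1"
  shows "fps_psing p (Ui * X - 1) = 0"
proof -
  have "fps_psing p Ui = Ui"
    by (rule fps_psing_inverse[OF _ assms]) (rule fps_ext, simp add: fps_psing_nth)
  then have "fps_psing p (Ui * X) = Ui * fps_psing p X" by (rule fps_psing_mult_left)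
  then show ?thesis using assms by (simp add: fps_psing_diff mult.commute)
qed

lemma fps_quot_eq:
  fixes U :: "'a::comm_ring_1 fps"
  assumes "U * Ui = 1"
  shows "fps_quot V U = Ui * V"
  unfolding fps_quot_def
proof (rule the_equality)
  show "U * (Ui * V) = V" using assms by (simp add: mult.assoc[symmetric])
  fix Y assume "U * Y = V"
  then have "Ui * (U * Y) = Ui * V" by simp
  then show "Y = Ui * V" using assms by (simp add: mult.assoc[symmetric] mult.commute[of Ui U])
qed

lemma fps_inverse_nth_0:
  fixes G H :: "'a::comm_ring_1 fps"
  assumes "G $ 0 = 1" "G * H = 1"
  shows "H $ 0 = 1"
  using arg_cong[OF assms(2), of "\<lambda>F. F $ 0"] assms(1) by simp

lemma fps_inverse_nth:
  fixes G H :: "'a::comm_ring_1 fps"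
  assumes "G $ 0 = 1" "G * H = 1" "n > 0"
  shows "H $ n = - (\<Sum>i=1..n. G $ i * H $ (n - i))"
proof -
  have "0 = (G * H) $ n" using assms(2,3) by simp
  also have "\<dots> = H $ n + (\<Sum>i=1..n. G $ i * H $ (n - i))"
    unfolding fps_mult_nth by (subst sum.atLeast_Suc_atMost) (simp_all add: assms(1))
  finally show ?thesis by (simp add: eq_neg_iff_add_eq_0)
qed

lemma fps_mult_nth_split_0:
  fixes F X :: "'a::comm_ring_1 fps"
  assumes "F $ 0 = 1"
  shows "(F * X) $ n = X $ n + (\<Sum>i=1..n. F $ i * X $ (n - i))"
  unfolding fps_mult_nth by (subst sum.atLeast_Suc_atMost) (simp_all add: assms)

section \<open>Integer combinations of products of coefficients\<close>

text \<open>
  The \<open>\<int>\<close>-span of the products x_lambda over the partitions lambda of n with a part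
  divisible by p; defined inductively so that closure under multiplication by x_j is a
  rule induction.
\<close>
inductive_set ppart_span :: "nat \<Rightarrow> 'a::comm_ring_1 fps \<Rightarrow> nat \<Rightarrow> 'a set"
  for p X n where
  zero: "0 \<in> ppart_span p X n"
| add: "a \<in> ppart_span p X n \<Longrightarrow> b \<in> ppart_span p X n \<Longrightarrow> a + b \<in> ppart_span p X n"
| uminus: "a \<in> ppart_span p X n \<Longrightarrow> - a \<in> ppart_span p X n"
| product: "is_partition lam n \<Longrightarrow> \<exists>k\<in>#lam. p dvd k \<Longrightarrow> (\<Prod>k\<in>#lam. X $ k) \<in> ppart_span p X n"

lemma ppart_span_sum:
  "finite A \<Longrightarrow> (\<And>i. i \<in> A \<Longrightarrow> f i \<in> ppart_span p X n) \<Longrightarrow> sum f A \<in> ppart_span p X n"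
  by (induction A rule: finite_induct) (auto intro: ppart_span.intros)

lemma ppart_span_mult_nth:
  assumes "a \<in> ppart_span p X i" "j > 0"
  shows "a * X $ j \<in> ppart_span p X (i + j)"
  using assms(1)
proof induction
  case (product lam)
  then have "(\<Prod>k\<in>#add_mset j lam. X $ k) \<in> ppart_span p X (i + j)"
    using assms(2) by (intro ppart_span.product) (auto simp: is_partition_def)
  then show ?case by (simp add: mult.commute)
qed (auto simp: distrib_right intro: ppart_span.intros)

lemma is_partition_bounds:
  "is_partition lam n \<Longrightarrow> set_mset lam \<subseteq> {1..n} \<and> size lam \<le> n"
proof (induction lam arbitrary: n)
  case (add x lam)
  then have "is_partition lam (n - x)" "x > 0" "n = x + sum_mset lam"
    by (auto simp: is_partition_def)
  with add.IH[of "n - x"] show ?case by auto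
qed simp

lemma finite_partitions: "finite {lam. is_partition lam n}"
proof (rule finite_subset)
  show "{lam. is_partition lam n} \<subseteq> (\<Union>m\<le>n. multisets_of_size {1..n} m)"
    using is_partition_bounds by (fastforce simp: multisets_of_size_def)
qed auto

lemma ppart_span_imp_integer_combination:
  assumes "v \<in> ppart_span p X n"
  shows "\<exists>a :: nat multiset \<Rightarrow> int. v = (\<Sum>lam\<in>{lam. is_partition lam n \<and> (\<exists>k\<in>#lam. p dvd k)}.
           of_int (a lam) * (\<Prod>k\<in>#lam. X $ k))"
  using assms
proof induction
  case zero
  show ?case by (rule exI[of _ "\<lambda>_. 0"]) simp
next
  case (add u v)
  then obtain f g where
    "u = (\<Sum>lam\<in>{lam. is_partition lam n \<and> (\<exists>k\<in>#lam. p dvd k)}. of_int (f lam) * (\<Prod>k\<in>#lam. X $ k))"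
    "v = (\<Sum>lam\<in>{lam. is_partition lam n \<and> (\<exists>k\<in>#lam. p dvd k)}. of_int (g lam) * (\<Prod>k\<in>#lam. X $ k))"
    by blast
  then show ?case by (intro exI[of _ "\<lambda>l. f l + g l"]) (simp add: sum.distrib distrib_right)
next
  case (uminus v)
  then obtain f where
    "v = (\<Sum>lam\<in>{lam. is_partition lam n \<and> (\<exists>k\<in>#lam. p dvd k)}. of_int (f lam) * (\<Prod>k\<in>#lam. X $ k))"
    by blast
  then show ?case by (intro exI[of _ "\<lambda>l. - f l"]) (simp add: sum_negf)
next
  case (product lam0)
  let ?S = "{lam. is_partition lam n \<and> (\<exists>k\<in>#lam. p dvd k)}"
  have "finite ?S" by (rule finite_subset[OF _ finite_partitions[of n]]) auto
  moreover have "lam0 \<in> ?S" using product by auto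
  ultimately have "(\<Sum>lam\<in>?S. of_int (if lam = lam0 then 1 else 0) * (\<Prod>k\<in>#lam. X $ k))
      = (\<Prod>k\<in>#lam0. X $ k)"
    by (simp add: if_distrib[of "\<lambda>x. of_int x * _"] sum.delta cong: if_cong)
  then show ?case by (intro exI[of _ "\<lambda>l. if l = lam0 then 1 else 0"]) simp
qed

lemma inverse_psing_nth_in_ppart_span:
  fixes X :: "'a::comm_ring_1 fps"
  assumes X0: "X $ 0 = 1" and Ui: "fps_psing p X * Ui = 1" and "m \<ge> 1"
  shows "Ui $ m \<in> ppart_span p X m"
  using \<open>m \<ge> 1\<close>
proof (induction m rule: less_induct)
  case (less m)
  let ?U = "fps_psing p X"
  have U0: "?U $ 0 = 1" using X0 by (simp add: fps_psing_nth)
  have "?U $ i * Ui $ (m - i) \<in> ppart_span p X m" if i: "i \<in> {1..m}" for i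
  proof (cases "i = m")
    case True
    have "is_partition {#m#} m" using less.prems by (simp add: is_partition_def)
    then have "p dvd m \<Longrightarrow> X $ m \<in> ppart_span p X m"
      using ppart_span.product[of "{#m#}" m p X] by simp
    then show ?thesis
      using True fps_inverse_nth_0[OF U0 Ui] by (auto simp: fps_psing_nth ppart_span.zero)
  next
    case False
    with i have "Ui $ (m - i) * X $ i \<in> ppart_span p X (m - i + i)"
      by (intro ppart_span_mult_nth less.IH) auto
    then show ?thesis using i by (auto simp: fps_psing_nth mult.commute ppart_span.zero)
  qed
  then have "(\<Sum>i=1..m. ?U $ i * Ui $ (m - i)) \<in> ppart_span p X m"
    by (intro ppart_span_sum) auto
  then show ?case
    using fps_inverse_nth[OF U0 Ui, of m] less.prems ppart_span.uminus by simp
qed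

lemma inverse_psing_mult_nth_in_ppart_span:
  fixes X :: "'a::comm_ring_1 fps"
  assumes X0: "X $ 0 = 1" and Ui: "fps_psing p X * Ui = 1" and "n \<ge> 1"
  shows "(Ui * X) $ n - X $ n \<in> ppart_span p X n"
proof -
  have Ui0: "Ui $ 0 = 1" using fps_inverse_nth_0[OF _ Ui] X0 by (simp add: fps_psing_nth)
  have "Ui $ i * X $ (n - i) \<in> ppart_span p X n" if i: "i \<in> {1..n}" for i
  proof (cases "i = n")
    case True
    then show ?thesis using inverse_psing_nth_in_ppart_span[OF X0 Ui, of n] \<open>n \<ge> 1\<close> X0 by simp
  next
    case False
    then have "Ui $ i * X $ (n - i) \<in> ppart_span p X (i + (n - i))"
      using i by (intro ppart_span_mult_nth inverse_psing_nth_in_ppart_span[OF X0 Ui]) auto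
    then show ?thesis using i by simp
  qed
  then show ?thesis
    unfolding fps_mult_nth_split_0[OF Ui0] by (auto intro: ppart_span_sum)
qed

section \<open>Rational polynomials in the variables not divisible by p\<close>

lemma of_rat_alg_0 [simp]: "of_rat_alg 0 = 0"
  by (simp add: of_rat_alg_def)

definition monomial_eval :: "(nat \<Rightarrow> 'a::comm_ring_1) \<Rightarrow> (nat \<Rightarrow>\<^sub>0 nat) \<Rightarrow> 'a" where
  "monomial_eval c m = (\<Prod>i\<in>Poly_Mapping.keys m. c i ^ Poly_Mapping.lookup m i)"

definition ratpoly_values :: "nat \<Rightarrow> (nat \<Rightarrow> 'a::comm_ring_1) \<Rightarrow> 'a set" where
  "ratpoly_values p c = {ratpoly_eval P c | P. \<forall>i\<in>ratpoly_vars P. \<not> p dvd i}"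

lemma monomial_eval_superset:
  "finite S \<Longrightarrow> Poly_Mapping.keys m \<subseteq> S
    \<Longrightarrow> monomial_eval c m = (\<Prod>i\<in>S. c i ^ Poly_Mapping.lookup m i)"
  unfolding monomial_eval_def by (rule prod.mono_neutral_left) (auto simp: in_keys_iff)

lemma monomial_eval_add: "monomial_eval c (m + m') = monomial_eval c m * monomial_eval c m'"
proof -
  let ?S = "Poly_Mapping.keys m \<union> Poly_Mapping.keys m'"
  have "monomial_eval c (m + m') = (\<Prod>i\<in>?S. c i ^ Poly_Mapping.lookup (m + m') i)"
    by (rule monomial_eval_superset) (use keys_add[of m m'] in auto)
  also have "\<dots> = (\<Prod>i\<in>?S. c i ^ Poly_Mapping.lookup m i) * (\<Prod>i\<in>?S. c i ^ Poly_Mapping.lookup m' i)"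
    by (simp add: lookup_add power_add prod.distrib)
  also have "\<dots> = monomial_eval c m * monomial_eval c m'"
    using monomial_eval_superset[of ?S m c] monomial_eval_superset[of ?S m' c] by simp
  finally show ?thesis .
qed

lemma ratpoly_eval_superset:
  "finite S \<Longrightarrow> Poly_Mapping.keys P \<subseteq> S
    \<Longrightarrow> ratpoly_eval P c = (\<Sum>m\<in>S. of_rat_alg (Poly_Mapping.lookup P m) * monomial_eval c m)"
  unfolding ratpoly_eval_def monomial_eval_def[symmetric]
  by (rule sum.mono_neutral_left) (auto simp: in_keys_iff)

lemma ratpoly_eval_single:
  "ratpoly_eval (Poly_Mapping.single m q) c = of_rat_alg q * monomial_eval c m"
  by (simp add: ratpoly_eval_def monomial_eval_def)

lemma ratpoly_values_0: "0 \<in> ratpoly_values p c"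
  unfolding ratpoly_values_def
  by (rule CollectI, rule exI[of _ 0]) (simp add: ratpoly_eval_def ratpoly_vars_def)

lemma ratpoly_values_term:
  "\<forall>i\<in>Poly_Mapping.keys m. \<not> p dvd i \<Longrightarrow> of_rat_alg q * monomial_eval c m \<in> ratpoly_values p c"
  unfolding ratpoly_values_def
  by (rule CollectI, rule exI[of _ "Poly_Mapping.single m q"])
    (auto simp: ratpoly_eval_single ratpoly_vars_def)

section \<open>Power series over a \<open>\<rat>\<close>-algebra\<close>

lemma fps_exp_alg_nth_0 [simp]: "fps_exp_alg F $ 0 = 1"
  unfolding fps_exp_alg_def by simp

lemma fps_exp_alg_nth_atMost:
  assumes "F $ 0 = 0" "n \<le> N"
  shows "fps_exp_alg F $ n = (\<Sum>k\<le>N. (F ^ k) $ n * rinv (of_nat (fact k)))"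
  unfolding fps_exp_alg_def fps_nth_Abs_fps
  by (rule sum.mono_neutral_left) (use assms startsby_zero_power_prefix[OF assms(1)] in auto)

context
  fixes T :: "'a::comm_ring_1 itself"
  assumes Q: "is_Q_algebra TYPE('a)"
begin

lemma of_nat_unit: "n > 0 \<Longrightarrow> (of_nat n :: 'a) dvd 1"
  using Q unfolding is_Q_algebra_def by blast

lemma of_int_unit: "b > 0 \<Longrightarrow> (of_int b :: 'a) dvd 1"
  using of_nat_unit[of "nat b"] by simp

lemma of_rat_alg_fraction:
  assumes "b > 0"
  shows "(of_rat_alg (of_int a / of_int b) :: 'a) = of_int a * rinv (of_int b)"
proof -
  obtain a' b' where q: "quotient_of (of_int a / of_int b) = (a', b')"
    by (cases "quotient_of (of_int a / of_int b)")
  have "b' > 0" using quotient_of_denom_pos[OF q] .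
  have "of_int a / of_int b = (of_int a' / of_int b' :: rat)" using quotient_of_div[OF q] .
  then have "of_int (a' * b) = (of_int (a * b') :: rat)"
    using assms \<open>b' > 0\<close> by (simp add: field_simps)
  then have "(of_int a' * of_int b :: 'a) = of_int a * of_int b'"
    by (metis of_int_eq_iff of_int_mult)
  then have "(of_int a' * rinv (of_int b') :: 'a) = of_int a * rinv (of_int b)"
    by (intro mult_rinv_eq_mult_rinv of_int_unit) (use assms \<open>b' > 0\<close> in auto)
  then show ?thesis unfolding of_rat_alg_def q by simp
qed

lemma of_rat_alg_cases:
  obtains a b where "b > 0" "q = of_int a / of_int b"
    "(of_rat_alg q :: 'a) = of_int a * rinv (of_int b)"
proof -
  obtain a b where q: "quotient_of q = (a, b)" by (cases "quotient_of q")
  show ?thesis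
    using that[of b a] quotient_of_denom_pos[OF q] quotient_of_div[OF q] of_rat_alg_fraction
    by auto
qed

lemma of_rat_alg_int: "(of_rat_alg (of_int a) :: 'a) = of_int a"
  using of_rat_alg_fraction[of 1 a] by simp

lemma of_rat_alg_1 [simp]: "(of_rat_alg 1 :: 'a) = 1"
  using of_rat_alg_int[of 1] by simp

lemma rinv_of_nat: "n > 0 \<Longrightarrow> (rinv (of_nat n) :: 'a) = of_rat_alg (1 / of_nat n)"
  using of_rat_alg_fraction[of "int n" 1] by simp

lemma of_rat_alg_add: "(of_rat_alg (q + r) :: 'a) = of_rat_alg q + of_rat_alg r"
proof -
  obtain a b where ab: "b > 0" "q = of_int a / of_int b"
    "(of_rat_alg q :: 'a) = of_int a * rinv (of_int b)"
    by (rule of_rat_alg_cases)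
  obtain c d where cd: "d > 0" "r = of_int c / of_int d"
    "(of_rat_alg r :: 'a) = of_int c * rinv (of_int d)"
    by (rule of_rat_alg_cases)
  have "q + r = of_int (a * d + c * b) / of_int (b * d)" using ab cd by (simp add: field_simps)
  then have "(of_rat_alg (q + r) :: 'a) = of_rat_alg (of_int (a * d + c * b) / of_int (b * d))"
    by simp
  also have "\<dots> = of_int (a * d + c * b) * rinv (of_int (b * d))"
    by (rule of_rat_alg_fraction) (use ab cd in simp)
  also have "\<dots> = of_int (a * d + c * b) * (rinv (of_int b) * rinv (of_int d))"
    using rinv_mult[OF of_int_unit of_int_unit, of b d] ab cd by simp
  also have "\<dots> = of_int a * rinv (of_int b) * (of_int d * rinv (of_int d))
      + of_int c * rinv (of_int d) * (of_int b * rinv (of_int b))"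
    by (simp add: algebra_simps)
  also have "\<dots> = of_rat_alg q + of_rat_alg r"
    using ab cd rinv_unit[OF of_int_unit] by simp
  finally show ?thesis .
qed

lemma of_rat_alg_mult: "(of_rat_alg (q * r) :: 'a) = of_rat_alg q * of_rat_alg r"
proof -
  obtain a b where ab: "b > 0" "q = of_int a / of_int b"
    "(of_rat_alg q :: 'a) = of_int a * rinv (of_int b)"
    by (rule of_rat_alg_cases)
  obtain c d where cd: "d > 0" "r = of_int c / of_int d"
    "(of_rat_alg r :: 'a) = of_int c * rinv (of_int d)"
    by (rule of_rat_alg_cases)
  have "q * r = of_int (a * c) / of_int (b * d)" using ab cd by (simp add: field_simps)
  then have "(of_rat_alg (q * r) :: 'a) = of_rat_alg (of_int (a * c) / of_int (b * d))"
    by simp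
  also have "\<dots> = of_int (a * c) * rinv (of_int (b * d))"
    by (rule of_rat_alg_fraction) (use ab cd in simp)
  also have "\<dots> = of_int (a * c) * (rinv (of_int b) * rinv (of_int d))"
    using rinv_mult[OF of_int_unit of_int_unit, of b d] ab cd by simp
  also have "\<dots> = of_rat_alg q * of_rat_alg r" using ab cd by (simp add: algebra_simps)
  finally show ?thesis .
qed

lemma of_nat_Suc_mult_rinv_fact:
  "of_nat (Suc j) * rinv (of_nat (fact (Suc j))) = (rinv (of_nat (fact j)) :: 'a)"
proof -
  have u: "(of_nat (Suc j) :: 'a) dvd 1" "(of_nat (fact j) :: 'a) dvd 1"
    by (rule of_nat_unit, simp)+
  have "rinv (of_nat (fact (Suc j)) :: 'a) = rinv (of_nat (Suc j) * of_nat (fact j))"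
    by (simp only: fact_Suc of_nat_mult of_nat_id)
  also have "\<dots> = rinv (of_nat (Suc j)) * rinv (of_nat (fact j))" by (rule rinv_mult[OF u])
  finally have "rinv (of_nat (fact (Suc j)) :: 'a) = rinv (of_nat (Suc j)) * rinv (of_nat (fact j))" .
  then show ?thesis using rinv_unit[OF u(1)] by (metis mult.assoc mult_1_left)
qed

lemma fps_deriv_fps_exp_alg:
  fixes F :: "'a fps"
  assumes F0: "F $ 0 = 0"
  shows "fps_deriv (fps_exp_alg F) = fps_deriv F * fps_exp_alg F"
proof (rule fps_ext)
  fix n
  let ?r = "\<lambda>k. rinv (of_nat (fact k)) :: 'a"
  have "fps_deriv (fps_exp_alg F) $ n = of_nat (n + 1) * (\<Sum>k\<le>Suc n. (F ^ k) $ Suc n * ?r k)"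
    by (simp add: fps_exp_alg_nth_atMost[OF F0, of "Suc n" "Suc n"])
  also have "\<dots> = (\<Sum>k\<le>Suc n. fps_deriv (F ^ k) $ n * ?r k)"
    by (simp add: sum_distrib_left algebra_simps)
  also have "\<dots> = (\<Sum>k\<le>Suc n. of_nat k * ?r k * (fps_deriv F * F ^ (k - 1)) $ n)"
    by (rule sum.cong) (simp_all add: fps_deriv_power mult.assoc fps_mult_left_const_nth)
  also have "\<dots> = (\<Sum>j\<le>n. ?r j * (fps_deriv F * F ^ j) $ n)"
    by (subst sum.atMost_Suc_shift)
      (simp add: of_nat_Suc_mult_rinv_fact del: of_nat_Suc fact_Suc)
  also have "\<dots> = (\<Sum>i=0..n. fps_deriv F $ i * (\<Sum>j\<le>n. (F ^ j) $ (n - i) * ?r j))"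
    by (simp add: fps_mult_nth sum_distrib_left sum.swap[of _ "{..n}"] algebra_simps)
  also have "\<dots> = (fps_deriv F * fps_exp_alg F) $ n"
    by (simp add: fps_mult_nth fps_exp_alg_nth_atMost[OF F0, of "n - _" n])
  finally show "fps_deriv (fps_exp_alg F) $ n = (fps_deriv F * fps_exp_alg F) $ n" .
qed

lemma fps_linear_ode_unique:
  fixes E1 E2 G :: "'a fps"
  assumes "fps_deriv E1 = G * E1" "fps_deriv E2 = G * E2" "E1 $ 0 = E2 $ 0"
  shows "E1 = E2"
proof (rule fps_ext)
  fix n show "E1 $ n = E2 $ n"
  proof (induction n rule: less_induct)
    case (less n)
    show ?case
    proof (cases n)
      case (Suc m)
      have "of_nat (Suc m) * E1 $ Suc m = (G * E1) $ m"
        using fps_deriv_nth[of E1 m] assms(1) by simp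
      also have "\<dots> = (G * E2) $ m"
        unfolding fps_mult_nth by (rule sum.cong) (use less Suc in auto)
      also have "\<dots> = of_nat (Suc m) * E2 $ Suc m"
        using fps_deriv_nth[of E2 m] assms(2) by simp
      finally have "of_nat (Suc m) * E1 $ Suc m = of_nat (Suc m) * E2 $ Suc m" .
      then show ?thesis
        unfolding Suc by (rule mult_left_cancel_unit[rotated]) (rule of_nat_unit, simp)
    qed (use assms(3) in simp)
  qed
qed

lemma fps_exp_alg_add:
  fixes A B :: "'a fps"
  assumes "A $ 0 = 0" "B $ 0 = 0"
  shows "fps_exp_alg (A + B) = fps_exp_alg A * fps_exp_alg B"
  by (rule fps_linear_ode_unique[where G = "fps_deriv A + fps_deriv B"])
    (use assms fps_deriv_fps_exp_alg[of A] fps_deriv_fps_exp_alg[of B]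
      fps_deriv_fps_exp_alg[of "A + B"] in \<open>simp_all add: algebra_simps\<close>)

lemma ratpoly_eval_add:
  "ratpoly_eval (P + P') (c :: nat \<Rightarrow> 'a) = ratpoly_eval P c + ratpoly_eval P' c"
proof -
  let ?S = "Poly_Mapping.keys P \<union> Poly_Mapping.keys P'"
  let ?t = "\<lambda>P m. of_rat_alg (Poly_Mapping.lookup P m) * monomial_eval c m"
  have "ratpoly_eval (P + P') c = (\<Sum>m\<in>?S. ?t (P + P') m)"
    by (rule ratpoly_eval_superset) (use keys_add[of P P'] in auto)
  also have "\<dots> = (\<Sum>m\<in>?S. ?t P m) + (\<Sum>m\<in>?S. ?t P' m)"
    by (simp add: lookup_add of_rat_alg_add distrib_right sum.distrib)
  also have "\<dots> = ratpoly_eval P c + ratpoly_eval P' c"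
    using ratpoly_eval_superset[of ?S P c] ratpoly_eval_superset[of ?S P' c] by simp
  finally show ?thesis .
qed

lemma ratpoly_values_add:
  assumes "a \<in> ratpoly_values p c" "b \<in> ratpoly_values p c"
  shows "a + b \<in> ratpoly_values p (c :: nat \<Rightarrow> 'a)"
proof -
  obtain P P' where P: "\<forall>i\<in>ratpoly_vars P. \<not> p dvd i" "a = ratpoly_eval P c"
    and P': "\<forall>i\<in>ratpoly_vars P'. \<not> p dvd i" "b = ratpoly_eval P' c"
    using assms unfolding ratpoly_values_def by auto
  have "ratpoly_vars (P + P') \<subseteq> ratpoly_vars P \<union> ratpoly_vars P'"
    using keys_add[of P P'] unfolding ratpoly_vars_def by auto
  then show ?thesis
    using P P' unfolding ratpoly_values_def by (auto simp: ratpoly_eval_add intro!: exI[of _ "P + P'"])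
qed

lemma ratpoly_values_sum:
  "finite A \<Longrightarrow> (\<And>i. i \<in> A \<Longrightarrow> f i \<in> ratpoly_values p c)
    \<Longrightarrow> sum f A \<in> ratpoly_values p (c :: nat \<Rightarrow> 'a)"
  by (induction A rule: finite_induct) (auto intro: ratpoly_values_0 ratpoly_values_add)

lemma ratpoly_values_mult:
  assumes "a \<in> ratpoly_values p c" "b \<in> ratpoly_values p c"
  shows "a * b \<in> ratpoly_values p (c :: nat \<Rightarrow> 'a)"
proof -
  obtain P P' where P: "\<forall>i\<in>ratpoly_vars P. \<not> p dvd i" "a = ratpoly_eval P c"
    and P': "\<forall>i\<in>ratpoly_vars P'. \<not> p dvd i" "b = ratpoly_eval P' c"
    using assms unfolding ratpoly_values_def by auto
  let ?t = "\<lambda>P m. of_rat_alg (Poly_Mapping.lookup P m) * monomial_eval c m"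
  have "a * b = (\<Sum>m\<in>Poly_Mapping.keys P. \<Sum>m'\<in>Poly_Mapping.keys P'. ?t P m * ?t P' m')"
    unfolding P(2) P'(2) ratpoly_eval_def monomial_eval_def[symmetric] by (rule sum_product)
  also have "\<dots> \<in> ratpoly_values p c"
  proof (intro ratpoly_values_sum finite_keys)
    fix m m' assume m: "m \<in> Poly_Mapping.keys P" and m': "m' \<in> Poly_Mapping.keys P'"
    have "Poly_Mapping.keys (m + m') \<subseteq> ratpoly_vars P \<union> ratpoly_vars P'"
      using keys_add[of m m'] m m' unfolding ratpoly_vars_def by auto
    then have "of_rat_alg (Poly_Mapping.lookup P m * Poly_Mapping.lookup P' m')
        * monomial_eval c (m + m') \<in> ratpoly_values p c"
      using P(1) P'(1) by (intro ratpoly_values_term) auto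
    then show "?t P m * ?t P' m' \<in> ratpoly_values p c"
      by (simp only: of_rat_alg_mult monomial_eval_add mult_ac)
  qed
  finally show ?thesis .
qed

lemma ratpoly_values_of_rat_alg: "of_rat_alg q \<in> ratpoly_values p (c :: nat \<Rightarrow> 'a)"
  using ratpoly_values_term[of 0 p q c] by (simp add: monomial_eval_def)

lemma ratpoly_values_var: "\<not> p dvd i \<Longrightarrow> c i \<in> ratpoly_values p (c :: nat \<Rightarrow> 'a)"
  using ratpoly_values_term[of "Poly_Mapping.single i 1" p 1 c]
  by (simp add: monomial_eval_def of_rat_alg_1)

lemma ratpoly_values_uminus:
  assumes "a \<in> ratpoly_values p c"
  shows "- a \<in> ratpoly_values p (c :: nat \<Rightarrow> 'a)"
proof -
  have "(of_rat_alg (-1) :: 'a) = -1" using of_rat_alg_int[of "-1"] by simp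
  then show ?thesis using ratpoly_values_mult[OF ratpoly_values_of_rat_alg assms, of "-1"] by simp
qed

lemma ratpoly_values_fps_mult:
  "(\<And>n. F $ n \<in> ratpoly_values p c) \<Longrightarrow> (\<And>n. G $ n \<in> ratpoly_values p c)
    \<Longrightarrow> (F * G) $ n \<in> ratpoly_values p (c :: nat \<Rightarrow> 'a)"
  unfolding fps_mult_nth by (intro ratpoly_values_sum ratpoly_values_mult) auto

lemma ratpoly_values_fps_1: "(1 :: 'a fps) $ n \<in> ratpoly_values p c"
  using ratpoly_values_of_rat_alg[of 1 p c]
  by (cases "n = 0") (simp_all add: ratpoly_values_0 of_rat_alg_1)

lemma ratpoly_values_fps_power:
  "(\<And>n. F $ n \<in> ratpoly_values p c) \<Longrightarrow> (F ^ k) $ n \<in> ratpoly_values p (c :: nat \<Rightarrow> 'a)"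
proof (induction k arbitrary: n)
  case 0
  show ?case unfolding power_0 by (rule ratpoly_values_fps_1)
next
  case (Suc k)
  show ?case unfolding power_Suc by (rule ratpoly_values_fps_mult[OF Suc.prems Suc.IH[OF Suc.prems]])
qed

lemma ratpoly_values_fps_exp_alg:
  "(\<And>n. F $ n \<in> ratpoly_values p c) \<Longrightarrow> fps_exp_alg F $ n \<in> ratpoly_values p (c :: nat \<Rightarrow> 'a)"
  unfolding fps_exp_alg_def fps_nth_Abs_fps
  by (intro ratpoly_values_sum ratpoly_values_mult ratpoly_values_fps_power)
    (simp_all add: rinv_of_nat ratpoly_values_of_rat_alg)

lemma ratpoly_values_fps_inverse:
  fixes G H :: "'a fps"
  assumes G0: "G $ 0 = 1" and GH: "G * H = 1" and G: "\<And>n. G $ n \<in> ratpoly_values p c"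
  shows "H $ n \<in> ratpoly_values p c"
proof (induction n rule: less_induct)
  case (less n)
  show ?case
  proof (cases "n = 0")
    case True
    then show ?thesis using fps_inverse_nth_0[OF G0 GH] ratpoly_values_fps_1[of 0] by simp
  next
    case False
    have "(\<Sum>i=1..n. G $ i * H $ (n - i)) \<in> ratpoly_values p c"
      by (intro ratpoly_values_sum ratpoly_values_mult G less.IH) auto
    then show ?thesis
      using fps_inverse_nth[OF G0 GH, of n] False ratpoly_values_uminus by simp
  qed
qed

lemma ratpoly_values_log_series_preg:
  "log_series (\<lambda>i. if p dvd i then 0 else c i) $ n \<in> ratpoly_values p (c :: nat \<Rightarrow> 'a)"
proof (cases "n = 0 \<or> p dvd n")
  case False
  then show ?thesis
    by (simp add: log_series_def rinv_of_nat ratpoly_values_mult ratpoly_values_var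
        ratpoly_values_of_rat_alg)
next
  case True
  then have "log_series (\<lambda>i. if p dvd i then 0 else c i) $ n = 0" by (auto simp: log_series_def)
  then show ?thesis by (simp add: ratpoly_values_0)
qed

lemma inverse_psing_mult_exp_nth_in_ratpoly_values:
  fixes c :: "nat \<Rightarrow> 'a" and X Ui :: "'a fps"
  assumes X: "X = fps_exp_alg (log_series c)" and Ui: "fps_psing p X * Ui = 1"
  shows "(Ui * X) $ n \<in> ratpoly_values p c"
proof -
  define A where "A = log_series (\<lambda>i. if p dvd i then 0 else c i)"
  define B where "B = log_series (\<lambda>i. if p dvd i then c i else 0)"
  have C: "log_series c = A + B"
    by (rule fps_ext) (simp add: log_series_def A_def B_def distrib_right)
  have XAB: "X = fps_exp_alg A * fps_exp_alg B"
    unfolding X C by (rule fps_exp_alg_add) (simp_all add: A_def B_def log_series_def)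
  have "fps_psing p B = B"
    by (rule fps_ext) (auto simp: fps_psing_nth B_def log_series_def)
  then have U: "fps_psing p X = fps_exp_alg B * fps_psing p (fps_exp_alg A)"
    unfolding XAB mult.commute[of "fps_exp_alg A"]
    by (intro fps_psing_mult_left fps_psing_fps_exp_alg)
  define G where "G = fps_psing p (fps_exp_alg A)"
  define H where "H = fps_right_inverse G 1"
  have G0: "G $ 0 = 1" by (simp add: G_def fps_psing_nth)
  have GH: "G * H = 1" unfolding H_def by (rule fps_right_inverse) (simp add: G0)
  have expA: "fps_exp_alg A $ n \<in> ratpoly_values p c" for n
    unfolding A_def by (intro ratpoly_values_fps_exp_alg ratpoly_values_log_series_preg)
  have "fps_psing p X * (H * fps_exp_alg A) = fps_exp_alg B * (G * H) * fps_exp_alg A"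
    unfolding U G_def by (simp add: mult_ac)
  also have "\<dots> = X" using GH XAB by (simp add: mult.commute)
  finally have "Ui * X = (fps_psing p X * Ui) * (H * fps_exp_alg A)" by (simp add: mult_ac)
  then have UiX: "Ui * X = H * fps_exp_alg A" using Ui by simp
  have "G $ n \<in> ratpoly_values p c" for n
    by (simp add: G_def fps_psing_nth expA ratpoly_values_0)
  then show ?thesis
    unfolding UiX by (intro ratpoly_values_fps_mult ratpoly_values_fps_inverse[OF G0 GH] expA)
qed

lemma ratpoly_values_fps_diff_1:
  "(\<And>n. F $ n \<in> ratpoly_values p c) \<Longrightarrow> (F - 1) $ n \<in> ratpoly_values p (c :: nat \<Rightarrow> 'a)"
  using ratpoly_values_add[OF _ ratpoly_values_uminus[OF ratpoly_values_fps_1]] by simp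

end

theorem mainTheorem3:
  fixes p :: nat and c :: "nat \<Rightarrow> 'a::comm_ring_1" and X U V Y :: "'a fps"
  assumes "prime p"
    and "is_Q_algebra TYPE('a)"
    and "X = fps_exp_alg (log_series c)"
    and "U = fps_psing p X"
    and "V = fps_preg p X"
    and "Y = fps_quot V U"
  shows "(\<forall>n. p dvd n \<longrightarrow> fps_nth Y n = 0)
    \<and> (\<forall>n. \<exists>P::ratpoly. (\<forall>i\<in>ratpoly_vars P. \<not> p dvd i) \<and> fps_nth Y n = ratpoly_eval P c)
    \<and> (\<forall>n\<ge>1. \<exists>a :: nat multiset \<Rightarrow> int.
          fps_nth Y n - fps_nth X n =
            (\<Sum>lam\<in>{lam. is_partition lam n \<and> (\<exists>k\<in>#lam. p dvd k)}.
               of_int (a lam) * (\<Prod>k\<in>#lam. fps_nth X k)))"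
proof -
  have X0: "X $ 0 = 1" using assms(3) by simp
  define Ui where "Ui = fps_right_inverse U 1"
  have Ui: "fps_psing p X * Ui = 1"
    unfolding Ui_def assms(4) by (rule fps_right_inverse) (simp add: X0 fps_psing_nth)
  have Y: "Y = Ui * X - 1"
    using fps_quot_eq[of U Ui V] Ui unfolding assms(4-6) fps_preg_eq by (simp add: algebra_simps)
  have "p dvd n \<Longrightarrow> Y $ n = 0" for n
    using arg_cong[OF fps_psing_inverse_mult_minus_1[OF Ui], of "\<lambda>F. F $ n"]
    unfolding Y by (simp add: fps_psing_nth)
  moreover have "Y $ n \<in> ratpoly_values p c" for n
    unfolding Y using assms(2,3) Ui
    by (intro ratpoly_values_fps_diff_1 inverse_psing_mult_exp_nth_in_ratpoly_values)
  moreover have "Y $ n - X $ n \<in> ppart_span p X n" if "n \<ge> 1" for n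
    using inverse_psing_mult_nth_in_ppart_span[OF X0 Ui that] that unfolding Y by simp
  ultimately show ?thesis
    unfolding ratpoly_values_def by (blast intro: ppart_span_imp_integer_combination)
qed

end
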